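(* Let $T$ be a random variable on $\mathbb{N}$ with $q_t=\mathbb{P}(T=t)$ and suppose $\mathbb{E}[T^\delta]<\infty$ for some $\delta>0$. Fix $\tau\in(0,1)$. Then for every $r\in(0,\delta)$ there exists a constant $\widehat{C}_r>0$ such that for all sufficiently large $n$, $$\mathbb{P}(T>u_n^\uparrow(\tau))\le\widehat{C}_r\,n^{\frac{(\tau-1)(\delta-r)}{1+\delta}}.$$
   Context: $u_n^\uparrow(\tau):=\inf\{t:q_s<n^{-1+\tau}\text{ for all }s\ge t\}$. *)

theory Defs
  imports "HOL-Probability.Probability"
begin

definition u_up :: "nat pmf \<Rightarrow> nat \<Rightarrow> real \<Rightarrow> nat" where
  "u_up q n \<tau> = Inf {t::nat. \<forall>s\<ge>t. pmf q s < real n powr (-1 + \<tau>)}"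

end

theory Submission
  imports Defs
begin

text \<open>Beyond \<open>u = u_up q n \<tau>\<close> every point mass is below \<open>\<epsilon> = n powr (\<tau> - 1)\<close>, so
  \<open>P(u < T < K) \<le> K \<epsilon>\<close>, while Markov's inequality for \<open>T powr \<delta>\<close> gives
  \<open>P(T \<ge> K) \<le> E[T powr \<delta>] / K powr \<delta>\<close>. Balancing the two terms with
  \<open>K \<approx> n powr ((1 - \<tau>) / (1 + \<delta>))\<close> yields \<open>P(T > u) = O(n powr ((\<tau> - 1) \<delta> / (1 + \<delta>)))\<close>,
  which is even slightly stronger than the claimed bound.\<close>

lemma pmf_nat_eventually_less:
  fixes q :: "nat pmf" and \<epsilon> :: real
  assumes "\<epsilon> > 0"
  shows "\<exists>t. \<forall>s\<ge>t. pmf q s < \<epsilon>"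
proof -
  have "summable (pmf q)"
    using abs_summable_on_nat_iff' summable_norm_cancel by blast
  then have "pmf q \<longlonglongrightarrow> 0"
    by (rule summable_LIMSEQ_zero)
  then have "\<forall>\<^sub>F s in sequentially. pmf q s < \<epsilon>"
    using assms by (rule order_tendstoD)
  then show ?thesis
    by (simp add: eventually_sequentially)
qed

lemma pmf_less_beyond_u_up:
  fixes q :: "nat pmf" and \<tau> :: real
  assumes "n > 0" and "u_up q n \<tau> \<le> s"
  shows "pmf q s < real n powr (\<tau> - 1)"
proof -
  let ?S = "{t::nat. \<forall>s\<ge>t. pmf q s < real n powr (-1 + \<tau>)}"
  have "?S \<noteq> {}"
    using pmf_nat_eventually_less[of "real n powr (-1 + \<tau>)" q] assms(1) by auto
  then have "Inf ?S \<in> ?S"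
    by (rule Inf_nat_def1)
  then show ?thesis
    using assms(2) unfolding u_up_def by simp
qed

lemma prob_atLeast_le_moment:
  fixes q :: "nat pmf" and \<delta> :: real
  assumes "\<delta> \<ge> 0" and "integrable (measure_pmf q) (\<lambda>t. real t powr \<delta>)" and "K > 0"
  shows "measure_pmf.prob q {K..} \<le> (\<integral>t. real t powr \<delta> \<partial>measure_pmf q) / real K powr \<delta>"
proof -
  have "measure_pmf.prob q {K..} \<le> measure_pmf.prob q {t. real K powr \<delta> \<le> real t powr \<delta>}"
    using assms(1) by (intro measure_pmf.finite_measure_mono) (auto intro: powr_mono2)
  also have "\<dots> \<le> (\<integral>t. real t powr \<delta> \<partial>measure_pmf q) / real K powr \<delta>"
    using integral_Markov_inequality_measure[OF assms(2), of UNIV "real K powr \<delta>"] assms(3)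
    by simp
  finally show ?thesis .
qed

lemma prob_greater_u_up_le:
  fixes q :: "nat pmf" and \<delta> \<tau> :: real
  assumes "\<delta> \<ge> 0" and "integrable (measure_pmf q) (\<lambda>t. real t powr \<delta>)"
    and "n > 0" and "K > 0"
  shows "measure_pmf.prob q {t. t > u_up q n \<tau>}
           \<le> real K * real n powr (\<tau> - 1) + (\<integral>t. real t powr \<delta> \<partial>measure_pmf q) / real K powr \<delta>"
proof -
  let ?u = "u_up q n \<tau>"
  have "measure_pmf.prob q {t. t > ?u} \<le> measure_pmf.prob q ({?u<..<K} \<union> {K..})"
    by (intro measure_pmf.finite_measure_mono) auto
  also have "\<dots> \<le> measure_pmf.prob q {?u<..<K} + measure_pmf.prob q {K..}"
    by (intro measure_subadditive) (auto simp: measure_pmf.emeasure_eq_measure)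
  also have "measure_pmf.prob q {?u<..<K} \<le> real K * real n powr (\<tau> - 1)"
  proof -
    have "measure_pmf.prob q {?u<..<K} = (\<Sum>s\<in>{?u<..<K}. pmf q s)"
      by (simp add: measure_measure_pmf_finite)
    also have "\<dots> \<le> real (card {?u<..<K}) * real n powr (\<tau> - 1)"
      using pmf_less_beyond_u_up[OF assms(3)]
      by (intro sum_bounded_above) (auto intro: less_imp_le)
    also have "\<dots> \<le> real K * real n powr (\<tau> - 1)"
      by (intro mult_right_mono) auto
    finally show ?thesis .
  qed
  finally show ?thesis
    using prob_atLeast_le_moment[OF assms(1,2,4)] by linarith
qed

lemma prob_greater_u_up_le_powr:
  fixes q :: "nat pmf" and \<delta> \<tau> :: real
  assumes "\<delta> \<ge> 0" and "integrable (measure_pmf q) (\<lambda>t. real t powr \<delta>)"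
    and "\<tau> \<le> 1" and "n > 0"
  defines "M \<equiv> \<integral>t. real t powr \<delta> \<partial>measure_pmf q"
  shows "measure_pmf.prob q {t. t > u_up q n \<tau>}
           \<le> (2 + M) * real n powr ((\<tau> - 1) * \<delta> / (1 + \<delta>))"
proof -
  define a where "a = (\<tau> - 1) * \<delta> / (1 + \<delta>)"
  define x where "x = real n powr ((1 - \<tau>) / (1 + \<delta>))"
  define K where "K = nat \<lceil>x\<rceil>"
  have "M \<ge> 0"
    unfolding M_def by (intro integral_nonneg_AE) auto
  have "x \<ge> 1"
    unfolding x_def using assms by (intro ge_one_powr_ge_zero) auto
  then have K: "x \<le> real K" "real K \<le> 2 * x" "K > 0"
    unfolding K_def by linarith+
  have "real K * real n powr (\<tau> - 1) \<le> 2 * x * real n powr (\<tau> - 1)"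
    using K by (intro mult_right_mono) auto
  also have "\<dots> = 2 * real n powr a"
    unfolding x_def a_def using assms(1) by (simp add: powr_add[symmetric] field_simps)
  finally have small_values: "real K * real n powr (\<tau> - 1) \<le> 2 * real n powr a" .
  have "M / real K powr \<delta> \<le> M / x powr \<delta>"
    using K \<open>x \<ge> 1\<close> \<open>M \<ge> 0\<close> assms(1) by (intro divide_left_mono powr_mono2) auto
  also have "x powr \<delta> = real n powr (- a)"
  proof -
    have "(1 - \<tau>) / (1 + \<delta>) * \<delta> = - a"
      unfolding a_def by (simp add: minus_divide_left algebra_simps)
    then show ?thesis
      unfolding x_def by (simp add: powr_powr)
  qed
  finally have large_values: "M / real K powr \<delta> \<le> M * real n powr a"
    by (simp add: powr_minus divide_inverse)
  show ?thesis
    using prob_greater_u_up_le[OF assms(1,2,4) \<open>K > 0\<close>, of \<tau>] small_values large_values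
    unfolding M_def[symmetric] a_def by (simp add: algebra_simps)
qed

theorem lemma7:
  fixes q :: "nat pmf" and \<delta> \<tau> :: real
  assumes "\<delta> > 0"
    and "integrable (measure_pmf q) (\<lambda>t. real t powr \<delta>)"
    and "0 < \<tau>" and "\<tau> < 1"
  shows "\<forall>r. 0 < r \<and> r < \<delta> \<longrightarrow>
           (\<exists>C>0. \<forall>\<^sub>F n in sequentially.
              measure_pmf.prob q {t. t > u_up q n \<tau>}
                \<le> C * real n powr ((\<tau> - 1) * (\<delta> - r) / (1 + \<delta>)))"
proof (intro allI impI)
  fix r assume r: "0 < r \<and> r < \<delta>"
  define M where "M = (\<integral>t. real t powr \<delta> \<partial>measure_pmf q)"
  have "M \<ge> 0"
    unfolding M_def by (intro integral_nonneg_AE) auto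
  have exponent: "(\<tau> - 1) * \<delta> / (1 + \<delta>) \<le> (\<tau> - 1) * (\<delta> - r) / (1 + \<delta>)"
    using assms(1,4) r by (intro divide_right_mono) (auto intro: mult_left_mono_neg)
  have "\<forall>\<^sub>F n in sequentially.
          measure_pmf.prob q {t. t > u_up q n \<tau>}
            \<le> (2 + M) * real n powr ((\<tau> - 1) * (\<delta> - r) / (1 + \<delta>))"
    using eventually_gt_at_top[of "0::nat"]
  proof eventually_elim
    case (elim n)
    have "measure_pmf.prob q {t. t > u_up q n \<tau>} \<le> (2 + M) * real n powr ((\<tau> - 1) * \<delta> / (1 + \<delta>))"
      unfolding M_def using assms elim by (intro prob_greater_u_up_le_powr) auto
    also have "\<dots> \<le> (2 + M) * real n powr ((\<tau> - 1) * (\<delta> - r) / (1 + \<delta>))"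
      using exponent elim \<open>M \<ge> 0\<close> by (intro mult_left_mono powr_mono) auto
    finally show ?case .
  qed
  then show "\<exists>C>0. \<forall>\<^sub>F n in sequentially.
               measure_pmf.prob q {t. t > u_up q n \<tau>}
                 \<le> C * real n powr ((\<tau> - 1) * (\<delta> - r) / (1 + \<delta>))"
    using \<open>M \<ge> 0\<close> by (intro exI[of _ "2 + M"]) auto
qed

end
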